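(* Let $\tau$ be a signature, $\phi\in SO(\tau)$, $\{\mathcal B_j:j\in J\}$ a family of $\tau$-structures, $\mathcal G$ an ultrafilter on $J$, and $(\mathcal A_\omega,\Upsilon_{\lim})$ the limit-Henkin model formed from $\{\mathcal B_j:j\in J\}$ by an $\omega$-long ultrachain $\langle\mathcal A_n:n\in\omega\rangle$ with $\mathcal A_0=\prod_{j\in J}\mathcal B_j/\mathcal G$. Then $\{j\in J:\mathcal B_j\models\phi\}\in\mathcal G$ if and only if $(\mathcal A_\omega,\Upsilon_{\lim})\models_\lambda\phi$.
   Context: $SO(\tau)$: second-order $\tau$-formulas with relation variables only; $\mathcal B_j\models\phi$ is the standard (full) second-order semantics. Decomposability: if $\mathcal C=\prod_k\mathcal C_k/\mathcal H$, a relation $R\subseteq C^m$ ($m\ge1$) is decomposable if $R=\prod_k R_k/\mathcal H$ for some $R_k\subseteq C_k^m$. For ultrafilters $\mathcal F$ on $I$, $\mathcal G$ on $J$, $X\in\mathcal G\times\mathcal F$ iff $\{i:\{j:(j,i)\in X\}\in\mathcal G\}\in\mathcal F$. An $\omega$-long ultrachain is a sequence $\langle\mathcal A_n:n\in\omega\rangle$ with $\mathcal A_{n+1}={}^{I_n}\mathcal A_n/\mathcal F_n$ for ultrafilters $\mathcal F_n$ on sets $I_n$, each $\mathcal A_n$ identified with its diagonal image so that $\mathcal A_n\subseteq\mathcal A_{n+1}$; its limit is $\mathcal A_\omega=\bigcup_n\mathcal A_n$. With $\mathcal A_0=\prod_j\mathcal B_j/\mathcal G$, $\mathcal A_n$ is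 identified with the ultraproduct of the family $\{\mathcal B_j\}$ (indexed by $J\times I_0\times\dots\times I_{n-1}$) by $\mathcal G\times\mathcal F_0\times\dots\times\mathcal F_{n-1}$; $\Upsilon_n$ is the set of relations on $\mathcal A_n$ decomposable w.r.t. this presentation. $\Upsilon_{\lim}$ is the set of relations $R$ on $\mathcal A_\omega$ for which there are $m$ and $R_m\in\Upsilon_m$ such that, defining $\langle\mathcal A_{k+1},R_{k+1}\rangle={}^{I_k}\langle\mathcal A_k,R_k\rangle/\mathcal F_k$ for $k\ge m$, $R=\bigcup_{k\ge m}R_k$. The pair $(\mathcal A_\omega,\Upsilon_{\lim})$ is the limit-Henkin model. $\models_\lambda$: Henkin semantics in $(\mathcal A_\omega,\Upsilon_{\lim})$, i.e. first-order parts evaluated as usual in the expansion by the assigned relations, second-order quantifiers ranging only over relations in $\Upsilon_{\lim}$ of the appropriate arity, and $\models_\lambda\phi$ meaning truth under all assignments (relation variables assigned values in $\Upsilon_{\lim}$). *)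

theory Defs
  imports Main
begin

text \<open>First-order variables are natural numbers; a second-order (relation) variable
is a pair (X, m) of a name X and an arity m; its arity is determined by the
number of arguments it is applied to.\<close>

datatype 'f trm = Var nat | Fn 'f "'f trm list"

datatype ('f, 'r) form =
    Eq "'f trm" "'f trm"
  | Rel 'r "'f trm list"
  | RVar nat "'f trm list"
  | Neg "('f, 'r) form"
  | Conj "('f, 'r) form" "('f, 'r) form"
  | Ex nat "('f, 'r) form"
  | ExR nat nat "('f, 'r) form"     \<comment> \<open>ExR X m: second-order quantifier over m-ary relations\<close>

fun wf_trm :: "('f \<Rightarrow> nat) \<Rightarrow> 'f trm \<Rightarrow> bool" where
  "wf_trm fa (Var x) = True"
| "wf_trm fa (Fn f ts) = (length ts = fa f \<and> (\<forall>t\<in>set ts. wf_trm fa t))"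

fun wf_form :: "('f \<Rightarrow> nat) \<Rightarrow> ('r \<Rightarrow> nat) \<Rightarrow> ('f, 'r) form \<Rightarrow> bool" where
  "wf_form fa ra (Eq s t) = (wf_trm fa s \<and> wf_trm fa t)"
| "wf_form fa ra (Rel r ts) = (length ts = ra r \<and> (\<forall>t\<in>set ts. wf_trm fa t))"
| "wf_form fa ra (RVar X ts) = (ts \<noteq> [] \<and> (\<forall>t\<in>set ts. wf_trm fa t))"
| "wf_form fa ra (Neg p) = wf_form fa ra p"
| "wf_form fa ra (Conj p q) = (wf_form fa ra p \<and> wf_form fa ra q)"
| "wf_form fa ra (Ex x p) = wf_form fa ra p"
| "wf_form fa ra (ExR X m p) = (1 \<le> m \<and> wf_form fa ra p)"

text \<open>m-ary relations on a set are sets of lists of length m.\<close>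
definition tuples :: "nat \<Rightarrow> 'u set \<Rightarrow> 'u list set" where
  "tuples m A = {xs. length xs = m \<and> set xs \<subseteq> A}"

record ('f, 'r, 'u) struct =
  dom :: "'u set"
  fun_int :: "'f \<Rightarrow> 'u list \<Rightarrow> 'u"
  rel_int :: "'r \<Rightarrow> 'u list set"

definition is_struct :: "('f \<Rightarrow> nat) \<Rightarrow> ('r \<Rightarrow> nat) \<Rightarrow> ('f, 'r, 'u) struct \<Rightarrow> bool" where
  "is_struct fa ra S \<longleftrightarrow> dom S \<noteq> {}
     \<and> (\<forall>f xs. xs \<in> tuples (fa f) (dom S) \<longrightarrow> fun_int S f xs \<in> dom S)
     \<and> (\<forall>r. rel_int S r \<subseteq> tuples (ra r) (dom S))"

fun teval :: "('f, 'r, 'u) struct \<Rightarrow> (nat \<Rightarrow> 'u) \<Rightarrow> 'f trm \<Rightarrow> 'u" where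
  "teval S v (Var x) = v x"
| "teval S v (Fn f ts) = fun_int S f (map (teval S v) ts)"

fun hsat :: "('f, 'r, 'u) struct \<Rightarrow> (nat \<Rightarrow> 'u list set set) \<Rightarrow> (nat \<Rightarrow> 'u)
      \<Rightarrow> (nat \<times> nat \<Rightarrow> 'u list set) \<Rightarrow> ('f, 'r) form \<Rightarrow> bool" where
  "hsat S Ups v V (Eq s t) = (teval S v s = teval S v t)"
| "hsat S Ups v V (Rel r ts) = (map (teval S v) ts \<in> rel_int S r)"
| "hsat S Ups v V (RVar X ts) = (map (teval S v) ts \<in> V (X, length ts))"
| "hsat S Ups v V (Neg p) = (\<not> hsat S Ups v V p)"
| "hsat S Ups v V (Conj p q) = (hsat S Ups v V p \<and> hsat S Ups v V q)"
| "hsat S Ups v V (Ex x p) = (\<exists>a\<in>dom S. hsat S Ups (v(x := a)) V p)"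
| "hsat S Ups v V (ExR X m p) = (\<exists>R\<in>Ups m. hsat S Ups v (V((X, m) := R)) p)"

definition henkin_models :: "('f, 'r, 'u) struct \<Rightarrow> (nat \<Rightarrow> 'u list set set) \<Rightarrow> ('f, 'r) form \<Rightarrow> bool" where
  "henkin_models S Ups p \<longleftrightarrow>
     (\<forall>v V. (\<forall>x. v x \<in> dom S) \<longrightarrow> (\<forall>X m. 1 \<le> m \<longrightarrow> V (X, m) \<in> Ups m) \<longrightarrow> hsat S Ups v V p)"

definition full_rels :: "('f, 'r, 'u) struct \<Rightarrow> nat \<Rightarrow> 'u list set set" where
  "full_rels S m = Pow (tuples m (dom S))"

definition full_models :: "('f, 'r, 'u) struct \<Rightarrow> ('f, 'r) form \<Rightarrow> bool" where
  "full_models S p \<longleftrightarrow> henkin_models S (full_rels S) p"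

definition ultrafilter_on :: "'a set \<Rightarrow> 'a set set \<Rightarrow> bool" where
  "ultrafilter_on I U \<longleftrightarrow> U \<subseteq> Pow I \<and> I \<in> U \<and> {} \<notin> U
     \<and> (\<forall>A\<in>U. \<forall>B\<in>U. A \<inter> B \<in> U)
     \<and> (\<forall>A\<in>U. \<forall>B. A \<subseteq> B \<and> B \<subseteq> I \<longrightarrow> B \<in> U)
     \<and> (\<forall>A. A \<subseteq> I \<longrightarrow> A \<in> U \<or> I - A \<in> U)"

text \<open>Index points of level n: pairs (j, [i_0, ..., i_{n-1}]).
  Qlarge J G I F n P says that {(j,i_0,...,i_{n-1}) : P j [i_0..i_{n-1}]} belongs to
  G x F_0 x ... x F_{n-1}, where (per the context) X \<in> G x F iff
  {i : {j : (j,i) \<in> X} \<in> G} \<in> F, iterated from the left.\<close>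
fun Qlarge :: "'j set \<Rightarrow> 'j set set \<Rightarrow> (nat \<Rightarrow> 'i set) \<Rightarrow> (nat \<Rightarrow> 'i set set)
      \<Rightarrow> nat \<Rightarrow> ('j \<Rightarrow> 'i list \<Rightarrow> bool) \<Rightarrow> bool" where
  "Qlarge J G I F 0 P = ({j \<in> J. P j []} \<in> G)"
| "Qlarge J G I F (Suc n) P = ({i \<in> I n. Qlarge J G I F n (\<lambda>j xs. P j (xs @ [i]))} \<in> F n)"

definition vlists :: "(nat \<Rightarrow> 'i set) \<Rightarrow> nat \<Rightarrow> 'i list set" where
  "vlists I n = {xs. length xs = n \<and> (\<forall>k<n. xs ! k \<in> I k)}"

text \<open>Following the identification in the context, an element of A_n is represented by a
  function f j [i_0,...,i_{n-1}] \<in> B_j; to make A_n \<subseteq> A_(n+1) literally (diagonal embedding),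
  functions are defined on all lists and "n-dependent" ones only look at the first n entries.\<close>
definition ndep :: "nat \<Rightarrow> ('j \<Rightarrow> 'i list \<Rightarrow> 'u) \<Rightarrow> bool" where
  "ndep n f \<longleftrightarrow> (\<forall>j xs. n \<le> length xs \<longrightarrow> f j xs = f j (take n xs))"

definition vfun :: "'j set \<Rightarrow> ('j \<Rightarrow> ('f, 'r, 'u) struct) \<Rightarrow> (nat \<Rightarrow> 'i set) \<Rightarrow> nat
      \<Rightarrow> ('j \<Rightarrow> 'i list \<Rightarrow> 'u) \<Rightarrow> bool" where
  "vfun J B I n f \<longleftrightarrow> ndep n f \<and> (\<forall>j\<in>J. \<forall>xs\<in>vlists I n. f j xs \<in> dom (B j))"

definition ueqv :: "'j set \<Rightarrow> 'j set set \<Rightarrow> (nat \<Rightarrow> 'i set) \<Rightarrow> (nat \<Rightarrow> 'i set set)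
      \<Rightarrow> ('j \<Rightarrow> 'i list \<Rightarrow> 'u) \<Rightarrow> ('j \<Rightarrow> 'i list \<Rightarrow> 'u) \<Rightarrow> bool" where
  "ueqv J G I F f g \<longleftrightarrow> (\<exists>n. ndep n f \<and> ndep n g \<and> Qlarge J G I F n (\<lambda>j xs. f j xs = g j xs))"

definition ucls :: "'j set \<Rightarrow> 'j set set \<Rightarrow> (nat \<Rightarrow> 'i set) \<Rightarrow> (nat \<Rightarrow> 'i set set)
      \<Rightarrow> ('j \<Rightarrow> 'i list \<Rightarrow> 'u) \<Rightarrow> ('j \<Rightarrow> 'i list \<Rightarrow> 'u) set" where
  "ucls J G I F f = {g. (\<exists>n. ndep n g) \<and> ueqv J G I F f g}"

text \<open>Universe of A_n = prod_{(j,i_0..i_{n-1})} B_j / (G x F_0 x ... x F_{n-1}).\<close>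
definition An :: "'j set \<Rightarrow> ('j \<Rightarrow> ('f, 'r, 'u) struct) \<Rightarrow> 'j set set \<Rightarrow> (nat \<Rightarrow> 'i set)
      \<Rightarrow> (nat \<Rightarrow> 'i set set) \<Rightarrow> nat \<Rightarrow> ('j \<Rightarrow> 'i list \<Rightarrow> 'u) set set" where
  "An J B G I F n = ucls J G I F ` {f. vfun J B I n f}"

definition urep :: "'j set \<Rightarrow> ('j \<Rightarrow> ('f, 'r, 'u) struct) \<Rightarrow> 'j set set \<Rightarrow> (nat \<Rightarrow> 'i set)
      \<Rightarrow> (nat \<Rightarrow> 'i set set) \<Rightarrow> ('j \<Rightarrow> 'i list \<Rightarrow> 'u) set \<Rightarrow> ('j \<Rightarrow> 'i list \<Rightarrow> 'u)" where
  "urep J B G I F c = (SOME f. (\<exists>n. vfun J B I n f) \<and> c = ucls J G I F f)"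

definition limit_struct :: "'j set \<Rightarrow> ('j \<Rightarrow> ('f, 'r, 'u) struct) \<Rightarrow> 'j set set \<Rightarrow> (nat \<Rightarrow> 'i set)
      \<Rightarrow> (nat \<Rightarrow> 'i set set) \<Rightarrow> ('f, 'r, ('j \<Rightarrow> 'i list \<Rightarrow> 'u) set) struct" where
  "limit_struct J B G I F =
     \<lparr> dom = (\<Union>n. An J B G I F n),
       fun_int = (\<lambda>f cs. ucls J G I F
          (\<lambda>j xs. fun_int (B j) f (map (\<lambda>c. urep J B G I F c j xs) cs))),
       rel_int = (\<lambda>r. {cs. \<exists>fs n. cs = map (ucls J G I F) fs \<and> (\<forall>f\<in>set fs. vfun J B I n f)
          \<and> Qlarge J G I F n (\<lambda>j xs. map (\<lambda>f. f j xs) fs \<in> rel_int (B j) r)}) \<rparr>"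

definition ups_n :: "'j set \<Rightarrow> ('j \<Rightarrow> ('f, 'r, 'u) struct) \<Rightarrow> 'j set set \<Rightarrow> (nat \<Rightarrow> 'i set)
      \<Rightarrow> (nat \<Rightarrow> 'i set set) \<Rightarrow> nat \<Rightarrow> nat \<Rightarrow> ('j \<Rightarrow> 'i list \<Rightarrow> 'u) set list set set" where
  "ups_n J B G I F n m = {R. \<exists>Rp.
      (\<forall>j\<in>J. \<forall>xs\<in>vlists I n. Rp j xs \<subseteq> tuples m (dom (B j)))
      \<and> R = {cs. \<exists>fs. length fs = m \<and> cs = map (ucls J G I F) fs \<and> (\<forall>f\<in>set fs. vfun J B I n f)
               \<and> Qlarge J G I F n (\<lambda>j xs. map (\<lambda>f. f j xs) fs \<in> Rp j xs)}}"

text \<open>Ultrapower step: A_(k+1) = A_k^{I_k}/F_k, where (under the identification) an element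
  [g] of A_(k+1) corresponds to the function i \<mapsto> [usec k i g] : I_k \<rightarrow> A_k.
  ext_rel k R_k is the relation R_(k+1) of  <A_(k+1), R_(k+1)> = <A_k, R_k>^{I_k}/F_k.\<close>
definition usec :: "nat \<Rightarrow> 'i \<Rightarrow> ('j \<Rightarrow> 'i list \<Rightarrow> 'u) \<Rightarrow> ('j \<Rightarrow> 'i list \<Rightarrow> 'u)" where
  "usec k i g = (\<lambda>j xs. g j (take k xs @ [i]))"

definition ext_rel :: "'j set \<Rightarrow> ('j \<Rightarrow> ('f, 'r, 'u) struct) \<Rightarrow> 'j set set \<Rightarrow> (nat \<Rightarrow> 'i set)
      \<Rightarrow> (nat \<Rightarrow> 'i set set) \<Rightarrow> nat \<Rightarrow> ('j \<Rightarrow> 'i list \<Rightarrow> 'u) set list set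
      \<Rightarrow> ('j \<Rightarrow> 'i list \<Rightarrow> 'u) set list set" where
  "ext_rel J B G I F k R = {cs. \<exists>gs. cs = map (ucls J G I F) gs \<and> (\<forall>g\<in>set gs. vfun J B I (Suc k) g)
      \<and> {i \<in> I k. map (\<lambda>g. ucls J G I F (usec k i g)) gs \<in> R} \<in> F k}"

fun rel_chain :: "'j set \<Rightarrow> ('j \<Rightarrow> ('f, 'r, 'u) struct) \<Rightarrow> 'j set set \<Rightarrow> (nat \<Rightarrow> 'i set)
      \<Rightarrow> (nat \<Rightarrow> 'i set set) \<Rightarrow> nat \<Rightarrow> ('j \<Rightarrow> 'i list \<Rightarrow> 'u) set list set \<Rightarrow> nat
      \<Rightarrow> ('j \<Rightarrow> 'i list \<Rightarrow> 'u) set list set" where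
  "rel_chain J B G I F m R 0 = R"
| "rel_chain J B G I F m R (Suc d) = ext_rel J B G I F (m + d) (rel_chain J B G I F m R d)"

definition ups_lim :: "'j set \<Rightarrow> ('j \<Rightarrow> ('f, 'r, 'u) struct) \<Rightarrow> 'j set set \<Rightarrow> (nat \<Rightarrow> 'i set)
      \<Rightarrow> (nat \<Rightarrow> 'i set set) \<Rightarrow> nat \<Rightarrow> ('j \<Rightarrow> 'i list \<Rightarrow> 'u) set list set set" where
  "ups_lim J B G I F m = {(\<Union>d. rel_chain J B G I F m0 R d) | m0 R. R \<in> ups_n J B G I F m0 m}"

end

theory Submission
  imports Defs
begin

text \<open>Elements of the limit \<open>A\<^sub>\<omega>\<close> are classes of functions \<open>f j [i\<^sub>0, ..., i\<^sub>n]\<close> that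
  depend on finitely many coordinates, and a relation belongs to \<open>\<Upsilon>\<^sub>l\<^sub>i\<^sub>m\<close> exactly when it
  is the limit of a family of relations \<open>Rp j [i\<^sub>0, ..., i\<^sub>k]\<close> on the factors: the ultrapower
  steps of the chain never change the family. Hence Los's theorem holds between the Henkin
  semantics of \<open>A\<^sub>\<omega>\<close> and the full semantics of the \<open>B\<^sub>j\<close>, for assignments represented at
  a common level: a second-order witness chosen coordinatewise in the \<open>B\<^sub>j\<close> is again such a
  family. An assignment of \<open>A\<^sub>\<omega>\<close> only matters on the finitely many free variables of \<open>\<phi>\<close>,
  which gives one direction; for the other, assignments refuting \<open>\<phi>\<close> in the factors where
  it fails form an assignment of \<open>A\<^sub>\<omega>\<close> at level 0.\<close>

fun tvars :: "'f trm \<Rightarrow> nat set" where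
  "tvars (Var x) = {x}"
| "tvars (Fn f ts) = (\<Union>t\<in>set ts. tvars t)"

fun fvs :: "('f, 'r) form \<Rightarrow> nat set" where
  "fvs (Eq s t) = tvars s \<union> tvars t"
| "fvs (Rel r ts) = (\<Union>t\<in>set ts. tvars t)"
| "fvs (RVar X ts) = (\<Union>t\<in>set ts. tvars t)"
| "fvs (Neg p) = fvs p"
| "fvs (Conj p q) = fvs p \<union> fvs q"
| "fvs (Ex x p) = fvs p - {x}"
| "fvs (ExR X m p) = fvs p"

fun frvs :: "('f, 'r) form \<Rightarrow> (nat \<times> nat) set" where
  "frvs (Eq s t) = {}"
| "frvs (Rel r ts) = {}"
| "frvs (RVar X ts) = {(X, length ts)}"
| "frvs (Neg p) = frvs p"
| "frvs (Conj p q) = frvs p \<union> frvs q"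
| "frvs (Ex x p) = frvs p"
| "frvs (ExR X m p) = frvs p - {(X, m)}"

lemma finite_tvars: "finite (tvars t)"
  by (induction t) auto

lemma finite_fvs: "finite (fvs p)"
  by (induction p) (auto simp: finite_tvars)

lemma finite_frvs: "finite (frvs p)"
  by (induction p) auto

lemma teval_agree: "\<forall>x\<in>tvars t. v x = v' x \<Longrightarrow> teval S v t = teval S v' t"
  by (induction t) (auto cong: map_cong)

lemma hsat_agree:
  "\<forall>x\<in>fvs p. v x = v' x \<Longrightarrow> \<forall>Xm\<in>frvs p. V Xm = V' Xm \<Longrightarrow> hsat S Ups v V p = hsat S Ups v' V' p"
proof (induction p arbitrary: v v' V V')
  case (Eq s t)
  then show ?case using teval_agree[of s v v' S] teval_agree[of t v v' S] by simp
next
  case (Rel r ts)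
  then have "map (teval S v) ts = map (teval S v') ts" by (auto intro: teval_agree)
  then show ?case by (simp only: hsat.simps)
next
  case (RVar X ts)
  then have "map (teval S v) ts = map (teval S v') ts" by (auto intro: teval_agree)
  with RVar.prems(2) show ?case by (simp only: hsat.simps) simp
next
  case (Conj p q)
  have "hsat S Ups v V p = hsat S Ups v' V' p" using Conj.prems by (intro Conj.IH(1)) auto
  moreover have "hsat S Ups v V q = hsat S Ups v' V' q" using Conj.prems by (intro Conj.IH(2)) auto
  ultimately show ?case by simp
next
  case (Ex x p)
  then have "hsat S Ups (v(x := a)) V p = hsat S Ups (v'(x := a)) V' p" for a
    by (intro Ex.IH) auto
  then show ?case by simp
next
  case (ExR X m p)
  then have "hsat S Ups v (V((X, m) := R)) p = hsat S Ups v' (V'((X, m) := R)) p" for R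
    by (intro ExR.IH) auto
  then show ?case by simp
qed simp_all

lemma exists_refuting_assignment:
  assumes "dom S \<noteq> {}"
  shows "\<exists>v V. (\<forall>x. v x \<in> dom S) \<and> (\<forall>X m. 1 \<le> m \<longrightarrow> V (X, m) \<in> full_rels S m)
    \<and> (hsat S (full_rels S) v V p \<longrightarrow> full_models S p)"
proof (cases "full_models S p")
  case True
  from assms obtain a where "a \<in> dom S" by blast
  then show ?thesis using True by (intro exI[of _ "\<lambda>_. a"] exI[of _ "\<lambda>_. {}"]) (simp add: full_rels_def)
next
  case False
  then show ?thesis unfolding full_models_def henkin_models_def by blast
qed

section \<open>Ultrafilters and iterated largeness\<close>

lemma ultrafilter_on_carrier: "ultrafilter_on I U \<Longrightarrow> I \<in> U"
  unfolding ultrafilter_on_def by blast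

lemma ultrafilter_on_not_empty: "ultrafilter_on I U \<Longrightarrow> {} \<notin> U"
  unfolding ultrafilter_on_def by blast

lemma ultrafilter_on_Int: "ultrafilter_on I U \<Longrightarrow> A \<in> U \<Longrightarrow> B \<in> U \<Longrightarrow> A \<inter> B \<in> U"
  unfolding ultrafilter_on_def by blast

lemma ultrafilter_on_superset: "ultrafilter_on I U \<Longrightarrow> A \<in> U \<Longrightarrow> A \<subseteq> C \<Longrightarrow> C \<subseteq> I \<Longrightarrow> C \<in> U"
  unfolding ultrafilter_on_def by blast

lemma ultrafilter_on_Diff_iff: "ultrafilter_on I U \<Longrightarrow> A \<subseteq> I \<Longrightarrow> I - A \<in> U \<longleftrightarrow> A \<notin> U"
  unfolding ultrafilter_on_def by (metis Diff_disjoint inf_commute)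

lemma Nil_in_vlists: "[] \<in> vlists I 0"
  by (simp add: vlists_def)

lemma length_vlists: "xs \<in> vlists I n \<Longrightarrow> length xs = n"
  by (simp add: vlists_def)

lemma snoc_in_vlists: "xs \<in> vlists I n \<Longrightarrow> i \<in> I n \<Longrightarrow> xs @ [i] \<in> vlists I (Suc n)"
  by (auto simp: vlists_def nth_append less_Suc_eq)

lemma take_in_vlists: "xs \<in> vlists I N \<Longrightarrow> n \<le> N \<Longrightarrow> take n xs \<in> vlists I n"
  by (auto simp: vlists_def)

lemma Qlarge_cong:
  "(\<And>j xs. j \<in> J \<Longrightarrow> xs \<in> vlists I n \<Longrightarrow> P j xs = P' j xs)
   \<Longrightarrow> Qlarge J G I F n P = Qlarge J G I F n P'"
proof (induction n arbitrary: P P')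
  case 0
  then have "{j \<in> J. P j []} = {j \<in> J. P' j []}" using Nil_in_vlists by blast
  then show ?case by simp
next
  case (Suc n)
  have "Qlarge J G I F n (\<lambda>j xs. P j (xs @ [i])) = Qlarge J G I F n (\<lambda>j xs. P' j (xs @ [i]))"
    if "i \<in> I n" for i
    using that by (intro Suc.IH) (simp add: Suc.prems snoc_in_vlists)
  then have "{i \<in> I n. Qlarge J G I F n (\<lambda>j xs. P j (xs @ [i]))}
      = {i \<in> I n. Qlarge J G I F n (\<lambda>j xs. P' j (xs @ [i]))}"
    by blast
  then show ?case by simp
qed

locale iterated_ultrafilters =
  fixes J :: "'j set" and G :: "'j set set" and I :: "nat \<Rightarrow> 'i set" and F :: "nat \<Rightarrow> 'i set set"
  assumes ultrafilter_G: "ultrafilter_on J G" and ultrafilter_F: "\<And>n. ultrafilter_on (I n) (F n)"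
begin

abbreviation large :: "nat \<Rightarrow> ('j \<Rightarrow> 'i list \<Rightarrow> bool) \<Rightarrow> bool" where
  "large \<equiv> Qlarge J G I F"

lemma large_all: "(\<And>j xs. j \<in> J \<Longrightarrow> xs \<in> vlists I n \<Longrightarrow> P j xs) \<Longrightarrow> large n P"
proof (induction n arbitrary: P)
  case 0
  then have "{j \<in> J. P j []} = J" using Nil_in_vlists by blast
  then show ?case using ultrafilter_on_carrier[OF ultrafilter_G] by simp
next
  case (Suc n)
  have "large n (\<lambda>j xs. P j (xs @ [i]))" if "i \<in> I n" for i
    using that by (intro Suc.IH) (simp add: Suc.prems snoc_in_vlists)
  then have "{i \<in> I n. large n (\<lambda>j xs. P j (xs @ [i]))} = I n" by blast
  then show ?case using ultrafilter_on_carrier[OF ultrafilter_F] by simp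
qed

lemma large_mono:
  "large n P \<Longrightarrow> (\<And>j xs. j \<in> J \<Longrightarrow> xs \<in> vlists I n \<Longrightarrow> P j xs \<Longrightarrow> P' j xs) \<Longrightarrow> large n P'"
proof (induction n arbitrary: P P')
  case 0
  then have "{j \<in> J. P j []} \<subseteq> {j \<in> J. P' j []}" using Nil_in_vlists by blast
  from ultrafilter_on_superset[OF ultrafilter_G _ this] 0 show ?case by auto
next
  case (Suc n)
  have "large n (\<lambda>j xs. P' j (xs @ [i]))" if "i \<in> I n" "large n (\<lambda>j xs. P j (xs @ [i]))" for i
    using that by (intro Suc.IH[OF that(2)]) (simp add: Suc.prems snoc_in_vlists)
  then have "{i \<in> I n. large n (\<lambda>j xs. P j (xs @ [i]))} \<subseteq> {i \<in> I n. large n (\<lambda>j xs. P' j (xs @ [i]))}"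
    by blast
  from ultrafilter_on_superset[OF ultrafilter_F _ this] Suc.prems show ?case by auto
qed

lemma large_conj: "large n P \<Longrightarrow> large n P' \<Longrightarrow> large n (\<lambda>j xs. P j xs \<and> P' j xs)"
proof (induction n arbitrary: P P')
  case 0
  have "{j \<in> J. P j [] \<and> P' j []} = {j \<in> J. P j []} \<inter> {j \<in> J. P' j []}" by blast
  with 0 ultrafilter_on_Int[OF ultrafilter_G] show ?case by auto
next
  case (Suc n)
  let ?L = "\<lambda>P. {i \<in> I n. large n (\<lambda>j xs. P j (xs @ [i]))}"
  have "?L P \<inter> ?L P' \<subseteq> ?L (\<lambda>j xs. P j xs \<and> P' j xs)"
    using Suc.IH by auto
  from ultrafilter_on_superset[OF ultrafilter_F _ this] ultrafilter_on_Int[OF ultrafilter_F] Suc.prems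
  show ?case by auto
qed

lemma large_conj_iff: "large n (\<lambda>j xs. P j xs \<and> P' j xs) \<longleftrightarrow> large n P \<and> large n P'"
proof
  show "large n P \<and> large n P'" if "large n (\<lambda>j xs. P j xs \<and> P' j xs)"
    using large_mono[OF that] by blast
qed (use large_conj in blast)

lemma large_not_iff: "large n (\<lambda>j xs. \<not> P j xs) \<longleftrightarrow> \<not> large n P"
proof (induction n arbitrary: P)
  case 0
  have "{j \<in> J. \<not> P j []} = J - {j \<in> J. P j []}" by blast
  then show ?case using ultrafilter_on_Diff_iff[OF ultrafilter_G] by simp
next
  case (Suc n)
  have "{i \<in> I n. large n (\<lambda>j xs. \<not> P j (xs @ [i]))} = I n - {i \<in> I n. large n (\<lambda>j xs. P j (xs @ [i]))}"
    using Suc.IH by blast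
  then show ?case using ultrafilter_on_Diff_iff[OF ultrafilter_F] by simp
qed

lemma large_take: "n \<le> N \<Longrightarrow> large N (\<lambda>j xs. P j (take n xs)) = large n P"
proof (induction N)
  case 0
  then show ?case by simp
next
  case (Suc N)
  show ?case
  proof (cases "n = Suc N")
    case True
    have "large n (\<lambda>j xs. P j (take n xs)) = large n P"
      by (rule Qlarge_cong) (simp add: length_vlists)
    with True show ?thesis by (simp only:)
  next
    case False
    with Suc.prems have "n \<le> N" by simp
    have "large N (\<lambda>j xs. P j (take n (xs @ [i]))) = large N (\<lambda>j xs. P j (take n xs))" for i
      using \<open>n \<le> N\<close> by (intro Qlarge_cong) (simp add: length_vlists)
    then have "large (Suc N) (\<lambda>j xs. P j (take n xs)) \<longleftrightarrow> {i \<in> I N. large n P} \<in> F N"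
      using Suc.IH[OF \<open>n \<le> N\<close>] by simp
    then show ?thesis
      using ultrafilter_on_carrier[OF ultrafilter_F] ultrafilter_on_not_empty[OF ultrafilter_F]
      by (cases "large n P") auto
  qed
qed

lemma large_level:
  assumes "n \<le> N" and "\<And>j xs. n \<le> length xs \<Longrightarrow> P j xs = P j (take n xs)"
  shows "large N P = large n P"
proof -
  have "large N P = large N (\<lambda>j xs. P j (take n xs))"
    using assms by (intro Qlarge_cong) (metis length_vlists)
  then show ?thesis using large_take[OF assms(1)] by simp
qed

lemma large_const: "large n (\<lambda>j xs. P j) \<longleftrightarrow> {j \<in> J. P j} \<in> G"
  using large_level[of 0 n "\<lambda>j xs. P j"] by simp

end

lemma ndep_take: "ndep n f \<Longrightarrow> n \<le> length xs \<Longrightarrow> f j xs = f j (take n xs)"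
  unfolding ndep_def by blast

lemma ndep_mono:
  fixes f :: "'j \<Rightarrow> 'i list \<Rightarrow> 'u"
  assumes "ndep n f" and "n \<le> N"
  shows "ndep N f"
  unfolding ndep_def
proof (intro allI impI)
  fix j and xs :: "'i list"
  assume "N \<le> length xs"
  with assms show "f j xs = f j (take N xs)"
    using ndep_take[OF assms(1), of xs] ndep_take[OF assms(1), of "take N xs"] by (simp add: min_absorb1)
qed

lemma ndep_common_level:
  "\<forall>x\<in>set ys. \<exists>m. ndep m (h x) \<Longrightarrow> \<exists>N. n \<le> N \<and> (\<forall>x\<in>set ys. ndep N (h x))"
proof (induction ys)
  case Nil
  then show ?case by auto
next
  case (Cons a ys)
  then obtain N m where "n \<le> N" "\<forall>x\<in>set ys. ndep N (h x)" "ndep m (h a)" by auto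
  then show ?case
    by (intro exI[of _ "max N m"]) (auto intro: ndep_mono)
qed

lemma map_apply_ndep:
  "\<forall>f\<in>set fs. ndep N f \<Longrightarrow> N \<le> length xs \<Longrightarrow> map (\<lambda>f. f j xs) fs = map (\<lambda>f. f j (take N xs)) fs"
  by (auto dest: ndep_take)

lemma ndep_map_apply:
  "\<forall>g\<in>set gs. ndep N g \<Longrightarrow> ndep N (\<lambda>j xs. \<Phi> j (map (\<lambda>g. g j xs) gs))"
  unfolding ndep_def by (metis map_apply_ndep ndep_def)

lemma vfun_ndep: "vfun J B I n f \<Longrightarrow> ndep n f"
  by (simp add: vfun_def)

lemma vfun_mono:
  assumes "vfun J B I n f" and "n \<le> N"
  shows "vfun J B I N f"
  unfolding vfun_def
proof (intro conjI ballI)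
  show "ndep N f" using assms ndep_mono vfun_ndep by blast
  fix j xs assume j: "j \<in> J" and xs: "xs \<in> vlists I N"
  have "f j xs = f j (take n xs)"
    using assms xs by (simp add: ndep_take vfun_ndep length_vlists)
  moreover have "f j (take n xs) \<in> dom (B j)"
    using assms(1) j take_in_vlists[OF xs assms(2)] unfolding vfun_def by blast
  ultimately show "f j xs \<in> dom (B j)" by simp
qed

context iterated_ultrafilters
begin

abbreviation uc :: "('j \<Rightarrow> 'i list \<Rightarrow> 'u) \<Rightarrow> ('j \<Rightarrow> 'i list \<Rightarrow> 'u) set" where
  "uc \<equiv> ucls J G I F"

lemma large_eq_level:
  assumes "ndep n f" and "ndep n g" and "n \<le> N"
  shows "large N (\<lambda>j xs. f j xs = g j xs) = large n (\<lambda>j xs. f j xs = g j xs)"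
proof (rule large_level[OF assms(3)])
  fix j and xs :: "'i list"
  assume "n \<le> length xs"
  then show "(f j xs = g j xs) = (f j (take n xs) = g j (take n xs))"
    using ndep_take[OF assms(1), of xs j] ndep_take[OF assms(2), of xs j] by (simp only:)
qed

lemma ueqv_iff_large:
  assumes "ndep n f" and "ndep n g"
  shows "ueqv J G I F f g \<longleftrightarrow> large n (\<lambda>j xs. f j xs = g j xs)"
proof
  assume "ueqv J G I F f g"
  then obtain n' where "ndep n' f" "ndep n' g" "large n' (\<lambda>j xs. f j xs = g j xs)"
    unfolding ueqv_def by blast
  then show "large n (\<lambda>j xs. f j xs = g j xs)"
    using large_eq_level[of n' f g "max n n'"] large_eq_level[OF assms, of "max n n'"] by simp
qed (use assms in \<open>auto simp: ueqv_def\<close>)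

lemma ucls_eq_iff:
  assumes f: "ndep n f" and g: "ndep n g"
  shows "uc f = uc g \<longleftrightarrow> large n (\<lambda>j xs. f j xs = g j xs)"
proof
  assume "uc f = uc g"
  have "large n (\<lambda>j xs. g j xs = g j xs)" by (rule large_all) (rule refl)
  then have "g \<in> uc g" using g ueqv_iff_large[OF g g] unfolding ucls_def by blast
  then have "ueqv J G I F f g" using \<open>uc f = uc g\<close> unfolding ucls_def by blast
  then show "large n (\<lambda>j xs. f j xs = g j xs)" using ueqv_iff_large[OF f g] by simp
next
  assume fg: "large n (\<lambda>j xs. f j xs = g j xs)"
  have "ueqv J G I F f h \<longleftrightarrow> ueqv J G I F g h" if h: "ndep n' h" for n' h
  proof -
    define M where "M = max n n'"
    have "n \<le> M" "n' \<le> M" unfolding M_def by simp_all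
    then have M: "ndep M f" "ndep M g" "ndep M h"
      using ndep_mono f g h by blast+
    have fgM: "large M (\<lambda>j xs. f j xs = g j xs)"
      using large_eq_level[OF f g \<open>n \<le> M\<close>] fg by simp
    have "large M (\<lambda>j xs. f j xs = h j xs) \<longleftrightarrow> large M (\<lambda>j xs. g j xs = h j xs)"
    proof
      assume "large M (\<lambda>j xs. f j xs = h j xs)"
      from large_conj[OF fgM this] show "large M (\<lambda>j xs. g j xs = h j xs)"
        by (rule large_mono) auto
    next
      assume "large M (\<lambda>j xs. g j xs = h j xs)"
      from large_conj[OF fgM this] show "large M (\<lambda>j xs. f j xs = h j xs)"
        by (rule large_mono) auto
    qed
    then show ?thesis using ueqv_iff_large[OF M(1,3)] ueqv_iff_large[OF M(2,3)] by simp
  qed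
  then show "uc f = uc g" unfolding ucls_def by (intro set_eqI) auto
qed

lemma map_ucls_eq_large:
  "\<forall>f\<in>set fs. ndep n f \<Longrightarrow> \<forall>g\<in>set gs. ndep n g \<Longrightarrow> map uc fs = map uc gs
   \<Longrightarrow> large n (\<lambda>j xs. map (\<lambda>f. f j xs) fs = map (\<lambda>g. g j xs) gs)"
proof (induction fs arbitrary: gs)
  case Nil
  then show ?case by (simp add: large_all)
next
  case (Cons f fs)
  then obtain g gs' where gs: "gs = g # gs'" by (cases gs) auto
  with Cons have "large n (\<lambda>j xs. f j xs = g j xs)"
    and "large n (\<lambda>j xs. map (\<lambda>f. f j xs) fs = map (\<lambda>g. g j xs) gs')"
    using ucls_eq_iff by auto
  from large_conj[OF this] show ?case
    unfolding gs by (rule large_mono) simp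
qed

lemma large_map_ucls_transfer:
  assumes fs: "\<forall>f\<in>set fs. ndep N1 f" and gs: "\<forall>g\<in>set gs. ndep N2 g"
    and eq: "map uc fs = map uc gs" and "n \<le> N1" "n \<le> N2"
    and "large N1 (\<lambda>j xs. \<Phi> j (take n xs) (map (\<lambda>f. f j xs) fs))"
  shows "large N2 (\<lambda>j xs. \<Phi> j (take n xs) (map (\<lambda>g. g j xs) gs))"
proof -
  define M where "M = max N1 N2"
  have M: "N1 \<le> M" "N2 \<le> M" unfolding M_def by auto
  have level: "large M (\<lambda>j xs. \<Phi> j (take n xs) (map (\<lambda>f. f j xs) hs)) =
      large N (\<lambda>j xs. \<Phi> j (take n xs) (map (\<lambda>f. f j xs) hs))"
    if "\<forall>h\<in>set hs. ndep N h" "n \<le> N" "N \<le> M" for hs N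
  proof (rule large_level[OF \<open>N \<le> M\<close>])
    fix j and xs :: "'i list"
    assume "N \<le> length xs"
    moreover have "take n (take N xs) = take n xs" using \<open>n \<le> N\<close> by (simp add: min_absorb1)
    ultimately show "\<Phi> j (take n xs) (map (\<lambda>f. f j xs) hs)
        = \<Phi> j (take n (take N xs)) (map (\<lambda>f. f j (take N xs)) hs)"
      using map_apply_ndep[OF that(1)] by metis
  qed
  have "large M (\<lambda>j xs. map (\<lambda>f. f j xs) fs = map (\<lambda>g. g j xs) gs)"
    using map_ucls_eq_large[OF _ _ eq] fs gs M ndep_mono by blast
  moreover have "large M (\<lambda>j xs. \<Phi> j (take n xs) (map (\<lambda>f. f j xs) fs))"
    using level[OF fs \<open>n \<le> N1\<close> M(1)] assms(6) by simp
  ultimately have "large M (\<lambda>j xs. \<Phi> j (take n xs) (map (\<lambda>g. g j xs) gs))"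
    by (rule large_mono[OF large_conj]) (metis (no_types))
  then show ?thesis
    using level[OF gs \<open>n \<le> N2\<close> M(2)] by simp
qed

end

locale limit_chain = iterated_ultrafilters J G I F
  for J :: "'j set" and G and I :: "nat \<Rightarrow> 'i set" and F +
  fixes B :: "'j \<Rightarrow> ('f, 'r, 'u) struct" and fa :: "'f \<Rightarrow> nat" and ra :: "'r \<Rightarrow> nat"
  assumes is_struct_B: "\<And>j. j \<in> J \<Longrightarrow> is_struct fa ra (B j)"
begin

abbreviation "A\<^sub>\<omega> \<equiv> limit_struct J B G I F"
abbreviation "\<Upsilon> \<equiv> ups_lim J B G I F"
abbreviation "vf \<equiv> vfun J B I"
abbreviation "ur \<equiv> urep J B G I F"

lemma dom_B_not_empty: "j \<in> J \<Longrightarrow> dom (B j) \<noteq> {}"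
  using is_struct_B by (simp add: is_struct_def)

lemma ucls_in_limit_dom: "vf n f \<Longrightarrow> uc f \<in> dom A\<^sub>\<omega>"
  by (auto simp: limit_struct_def An_def)

lemma limit_domE:
  assumes "c \<in> dom A\<^sub>\<omega>"
  obtains n f where "vf n f" and "c = uc f"
  using assms by (auto simp: limit_struct_def An_def)

lemma urep_spec:
  assumes "c \<in> dom A\<^sub>\<omega>"
  shows "\<exists>n. vf n (ur c)" and "uc (ur c) = c"
proof -
  have "\<exists>f. (\<exists>n. vf n f) \<and> c = uc f" using assms by (blast elim: limit_domE)
  then have "(\<exists>n. vf n (ur c)) \<and> c = uc (ur c)" unfolding urep_def by (rule someI_ex)
  then show "\<exists>n. vf n (ur c)" and "uc (ur c) = c" by simp_all
qed

lemma fun_int_limit: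
  assumes fs: "\<forall>f\<in>set fs. vf n f"
  shows "fun_int A\<^sub>\<omega> h (map uc fs) = uc (\<lambda>j xs. fun_int (B j) h (map (\<lambda>f. f j xs) fs))"
proof -
  define gs where "gs = map (\<lambda>f. ur (uc f)) fs"
  have "uc (ur (uc f)) = uc f" if "f \<in> set fs" for f
    using fs that urep_spec(2)[OF ucls_in_limit_dom] by blast
  then have ucgs: "map uc gs = map uc fs" by (simp add: gs_def)
  have "\<forall>f\<in>set fs. \<exists>m. ndep m (ur (uc f))"
    using fs urep_spec(1) ucls_in_limit_dom vfun_ndep by metis
  then obtain N where "n \<le> N" and "\<forall>f\<in>set fs. ndep N (ur (uc f))"
    using ndep_common_level[of fs "\<lambda>f. ur (uc f)" n] by blast
  then have gsN: "\<forall>g\<in>set gs. ndep N g" unfolding gs_def by simp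
  have fsN: "\<forall>f\<in>set fs. ndep N f"
    using fs \<open>n \<le> N\<close> by (meson ndep_mono vfun_ndep)
  have "large N (\<lambda>j xs. fun_int (B j) h (map (\<lambda>g. g j xs) gs) = fun_int (B j) h (map (\<lambda>f. f j xs) fs))"
    using map_ucls_eq_large[OF gsN fsN ucgs] by (rule large_mono) simp
  then have "uc (\<lambda>j xs. fun_int (B j) h (map (\<lambda>g. g j xs) gs))
      = uc (\<lambda>j xs. fun_int (B j) h (map (\<lambda>f. f j xs) fs))"
    using ucls_eq_iff[OF ndep_map_apply[OF gsN] ndep_map_apply[OF fsN],
        of "\<lambda>j. fun_int (B j) h" "\<lambda>j. fun_int (B j) h"]
    by simp
  then show ?thesis by (simp add: limit_struct_def gs_def comp_def)
qed

lemma rel_int_limit_iff: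
  assumes fs: "\<forall>f\<in>set fs. vf n f"
  shows "map uc fs \<in> rel_int A\<^sub>\<omega> r \<longleftrightarrow> large n (\<lambda>j xs. map (\<lambda>f. f j xs) fs \<in> rel_int (B j) r)"
proof
  assume "map uc fs \<in> rel_int A\<^sub>\<omega> r"
  then obtain gs m where gs: "map uc gs = map uc fs" "\<forall>g\<in>set gs. vf m g"
     "large m (\<lambda>j xs. map (\<lambda>g. g j xs) gs \<in> rel_int (B j) r)"
    by (auto simp: limit_struct_def)
  have "\<forall>g\<in>set gs. ndep m g" "\<forall>f\<in>set fs. ndep n f"
    using gs(2) fs vfun_ndep by blast+
  from large_map_ucls_transfer[where \<Phi>="\<lambda>j _ ys. ys \<in> rel_int (B j) r", OF this gs(1) le0 le0]
  show "large n (\<lambda>j xs. map (\<lambda>f. f j xs) fs \<in> rel_int (B j) r)"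
    using gs(3) by simp
qed (use fs in \<open>auto simp: limit_struct_def\<close>)

lemma teval_in_dom:
  "j \<in> J \<Longrightarrow> \<forall>x. v x \<in> dom (B j) \<Longrightarrow> wf_trm fa t \<Longrightarrow> teval (B j) v t \<in> dom (B j)"
proof (induction t)
  case (Fn f ts)
  then have "map (teval (B j) v) ts \<in> tuples (fa f) (dom (B j))"
    by (auto simp: tuples_def)
  then show ?case using is_struct_B[OF Fn.prems(1)] by (simp add: is_struct_def)
qed simp

lemma vfun_teval:
  assumes "\<forall>x. vf n (vr x)" and "wf_trm fa t"
  shows "vf n (\<lambda>j xs. teval (B j) (\<lambda>x. vr x j xs) t)"
  unfolding vfun_def ndep_def
proof (intro conjI allI impI ballI)
  fix j and xs :: "'i list"
  assume "n \<le> length xs"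
  then have "(\<lambda>x. vr x j xs) = (\<lambda>x. vr x j (take n xs))"
    using assms(1) by (intro ext) (meson ndep_take vfun_ndep)
  then show "teval (B j) (\<lambda>x. vr x j xs) t = teval (B j) (\<lambda>x. vr x j (take n xs)) t" by simp
next
  fix j xs assume "j \<in> J" "xs \<in> vlists I n"
  with assms show "teval (B j) (\<lambda>x. vr x j xs) t \<in> dom (B j)"
    by (intro teval_in_dom) (auto simp: vfun_def)
qed

lemma teval_limit:
  assumes "\<forall>x. vf n (vr x)"
  shows "wf_trm fa t \<Longrightarrow> teval A\<^sub>\<omega> (\<lambda>x. uc (vr x)) t = uc (\<lambda>j xs. teval (B j) (\<lambda>x. vr x j xs) t)"
proof (induction t)
  case (Fn h ts)
  let ?fs = "map (\<lambda>t j xs. teval (B j) (\<lambda>x. vr x j xs) t) ts"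
  have fs: "\<forall>f\<in>set ?fs. vf n f" using Fn.prems vfun_teval[OF assms] by auto
  have "map (teval A\<^sub>\<omega> (\<lambda>x. uc (vr x))) ts = map uc ?fs"
    using Fn by (auto intro: map_cong)
  then have "teval A\<^sub>\<omega> (\<lambda>x. uc (vr x)) (Fn h ts) = fun_int A\<^sub>\<omega> h (map uc ?fs)"
    by (simp only: teval.simps)
  also have "\<dots> = uc (\<lambda>j xs. fun_int (B j) h (map (\<lambda>f. f j xs) ?fs))"
    by (rule fun_int_limit[OF fs])
  finally show ?case by (simp add: comp_def)
qed simp

section \<open>Decomposable relations\<close>

definition rel_family :: "nat \<Rightarrow> nat \<Rightarrow> ('j \<Rightarrow> 'i list \<Rightarrow> 'u list set) \<Rightarrow> bool" where
  "rel_family m n0 Rp \<longleftrightarrow> (\<forall>j\<in>J. \<forall>xs\<in>vlists I n0. Rp j xs \<subseteq> tuples m (dom (B j)))"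

definition rel_at :: "nat \<Rightarrow> nat \<Rightarrow> ('j \<Rightarrow> 'i list \<Rightarrow> 'u list set) \<Rightarrow> nat
    \<Rightarrow> ('j \<Rightarrow> 'i list \<Rightarrow> 'u) set list set" where
  "rel_at m n0 Rp k = {cs. \<exists>fs. length fs = m \<and> cs = map uc fs \<and> (\<forall>f\<in>set fs. vf k f)
      \<and> large k (\<lambda>j xs. map (\<lambda>f. f j xs) fs \<in> Rp j (take n0 xs))}"

definition lim_rel :: "nat \<Rightarrow> nat \<Rightarrow> ('j \<Rightarrow> 'i list \<Rightarrow> 'u list set)
    \<Rightarrow> ('j \<Rightarrow> 'i list \<Rightarrow> 'u) set list set" where
  "lim_rel m n0 Rp = (\<Union>d. rel_at m n0 Rp (n0 + d))"

lemma large_if_in_rel_at: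
  assumes "n0 \<le> N" "n0 \<le> k" and fs: "\<forall>f\<in>set fs. vf N f" and "map uc fs \<in> rel_at m n0 Rp k"
  shows "large N (\<lambda>j xs. map (\<lambda>f. f j xs) fs \<in> Rp j (take n0 xs))"
proof -
  obtain gs where gs: "map uc gs = map uc fs" "\<forall>g\<in>set gs. vf k g"
      "large k (\<lambda>j xs. map (\<lambda>g. g j xs) gs \<in> Rp j (take n0 xs))"
    using assms(4) unfolding rel_at_def by auto
  have "\<forall>g\<in>set gs. ndep k g" "\<forall>f\<in>set fs. ndep N f"
    using gs(2) fs vfun_ndep by blast+
  from large_map_ucls_transfer[where \<Phi>="\<lambda>j p ys. ys \<in> Rp j p", OF this gs(1) assms(2,1) gs(3)]
  show ?thesis .
qed

lemma vfun_usec: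
  assumes "vf (Suc k) g" and "i \<in> I k"
  shows "vf k (usec k i g)"
  unfolding vfun_def
proof (intro conjI ballI)
  show "ndep k (usec k i g)" unfolding ndep_def usec_def by (simp add: min_def)
next
  fix j xs assume "j \<in> J" "xs \<in> vlists I k"
  moreover have "xs @ [i] \<in> vlists I (Suc k)" by (rule snoc_in_vlists[OF \<open>xs \<in> vlists I k\<close> assms(2)])
  ultimately show "usec k i g j xs \<in> dom (B j)"
    using assms(1) length_vlists unfolding vfun_def usec_def by fastforce
qed

lemma usec_in_rel_at_iff:
  assumes "n0 \<le> k" "length gs = m" and gs: "\<forall>g\<in>set gs. vf (Suc k) g" and "i \<in> I k"
  shows "map (\<lambda>g. uc (usec k i g)) gs \<in> rel_at m n0 Rp k
     \<longleftrightarrow> large k (\<lambda>j xs. map (\<lambda>g. g j (xs @ [i])) gs \<in> Rp j (take n0 (xs @ [i])))"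
proof -
  define fs where "fs = map (usec k i) gs"
  have fs: "\<forall>f\<in>set fs. vf k f" unfolding fs_def using vfun_usec gs \<open>i \<in> I k\<close> by auto
  have "map (\<lambda>g. uc (usec k i g)) gs = map uc fs" unfolding fs_def by simp
  also have "map uc fs \<in> rel_at m n0 Rp k
      \<longleftrightarrow> large k (\<lambda>j xs. map (\<lambda>f. f j xs) fs \<in> Rp j (take n0 xs))"
  proof
    have "length fs = m" unfolding fs_def using assms(2) by simp
    then show "map uc fs \<in> rel_at m n0 Rp k" if "large k (\<lambda>j xs. map (\<lambda>f. f j xs) fs \<in> Rp j (take n0 xs))"
      using that fs unfolding rel_at_def by blast
  qed (rule large_if_in_rel_at[OF assms(1,1) fs])
  also have "\<dots> \<longleftrightarrow> large k (\<lambda>j xs. map (\<lambda>g. g j (xs @ [i])) gs \<in> Rp j (take n0 (xs @ [i])))"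
  proof (rule Qlarge_cong)
    fix j xs assume "xs \<in> vlists I k"
    then have "length xs = k" by (rule length_vlists)
    with assms(1) show "(map (\<lambda>f. f j xs) fs \<in> Rp j (take n0 xs))
        = (map (\<lambda>g. g j (xs @ [i])) gs \<in> Rp j (take n0 (xs @ [i])))"
      by (simp add: fs_def usec_def comp_def)
  qed
  finally show ?thesis .
qed

text \<open>The ultrapower step does not change the defining family: it only adds a coordinate on
  which the family does not depend.\<close>

lemma ext_rel_rel_at:
  assumes "n0 \<le> k"
  shows "ext_rel J B G I F k (rel_at m n0 Rp k) = rel_at m n0 Rp (Suc k)"
proof (intro set_eqI iffI)
  fix cs assume "cs \<in> ext_rel J B G I F k (rel_at m n0 Rp k)"
  then obtain gs where gs: "cs = map uc gs" "\<forall>g\<in>set gs. vf (Suc k) g"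
    and large_gs: "{i \<in> I k. map (\<lambda>g. uc (usec k i g)) gs \<in> rel_at m n0 Rp k} \<in> F k"
    unfolding ext_rel_def by blast
  have "{i \<in> I k. map (\<lambda>g. uc (usec k i g)) gs \<in> rel_at m n0 Rp k} \<noteq> {}"
    using large_gs ultrafilter_on_not_empty[OF ultrafilter_F] by metis
  then have "length gs = m" unfolding rel_at_def by (auto dest: arg_cong[of _ _ length])
  with large_gs have "large (Suc k) (\<lambda>j xs. map (\<lambda>g. g j xs) gs \<in> Rp j (take n0 xs))"
    using usec_in_rel_at_iff[OF assms _ gs(2)] by (simp cong: conj_cong)
  with gs \<open>length gs = m\<close> show "cs \<in> rel_at m n0 Rp (Suc k)" unfolding rel_at_def by blast
next
  fix cs assume "cs \<in> rel_at m n0 Rp (Suc k)"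
  then obtain gs where gs: "length gs = m" "cs = map uc gs" "\<forall>g\<in>set gs. vf (Suc k) g"
    "large (Suc k) (\<lambda>j xs. map (\<lambda>g. g j xs) gs \<in> Rp j (take n0 xs))"
    unfolding rel_at_def by blast
  then have "{i \<in> I k. map (\<lambda>g. uc (usec k i g)) gs \<in> rel_at m n0 Rp k} \<in> F k"
    using usec_in_rel_at_iff[OF assms gs(1,3)] by (simp cong: conj_cong)
  with gs show "cs \<in> ext_rel J B G I F k (rel_at m n0 Rp k)" unfolding ext_rel_def by blast
qed

lemma rel_chain_rel_at: "rel_chain J B G I F n0 (rel_at m n0 Rp n0) d = rel_at m n0 Rp (n0 + d)"
  by (induction d) (simp_all add: ext_rel_rel_at)

lemma ups_n_iff: "R \<in> ups_n J B G I F n0 m \<longleftrightarrow> (\<exists>Rp. rel_family m n0 Rp \<and> R = rel_at m n0 Rp n0)"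
proof -
  have "{cs. \<exists>fs. length fs = m \<and> cs = map uc fs \<and> (\<forall>f\<in>set fs. vf n0 f)
      \<and> large n0 (\<lambda>j xs. map (\<lambda>f. f j xs) fs \<in> Rp j xs)} = rel_at m n0 Rp n0" for Rp
  proof -
    have "large n0 (\<lambda>j xs. map (\<lambda>f. f j xs) fs \<in> Rp j xs)
        = large n0 (\<lambda>j xs. map (\<lambda>f. f j xs) fs \<in> Rp j (take n0 xs))" for fs
      by (rule Qlarge_cong) (simp add: length_vlists)
    then show ?thesis unfolding rel_at_def by simp
  qed
  then show ?thesis unfolding ups_n_def rel_family_def by auto
qed

lemma ups_lim_iff: "R \<in> \<Upsilon> m \<longleftrightarrow> (\<exists>n0 Rp. rel_family m n0 Rp \<and> R = lim_rel m n0 Rp)"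
proof
  assume "R \<in> \<Upsilon> m"
  then obtain n0 R0 where R: "R = (\<Union>d. rel_chain J B G I F n0 R0 d)" "R0 \<in> ups_n J B G I F n0 m"
    unfolding ups_lim_def by blast
  then obtain Rp where "rel_family m n0 Rp" "R0 = rel_at m n0 Rp n0" using ups_n_iff by blast
  with R(1) show "\<exists>n0 Rp. rel_family m n0 Rp \<and> R = lim_rel m n0 Rp"
    unfolding lim_rel_def by (auto simp: rel_chain_rel_at)
next
  assume "\<exists>n0 Rp. rel_family m n0 Rp \<and> R = lim_rel m n0 Rp"
  then obtain n0 Rp where "rel_family m n0 Rp" "R = lim_rel m n0 Rp" by blast
  then have "rel_at m n0 Rp n0 \<in> ups_n J B G I F n0 m"
    and "R = (\<Union>d. rel_chain J B G I F n0 (rel_at m n0 Rp n0) d)"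
    unfolding lim_rel_def by (auto simp: ups_n_iff rel_chain_rel_at)
  then show "R \<in> \<Upsilon> m" unfolding ups_lim_def by blast
qed

lemma map_ucls_in_lim_rel_iff:
  assumes "n0 \<le> N" "length fs = m" "\<forall>f\<in>set fs. vf N f"
  shows "map uc fs \<in> lim_rel m n0 Rp \<longleftrightarrow> large N (\<lambda>j xs. map (\<lambda>f. f j xs) fs \<in> Rp j (take n0 xs))"
proof
  assume "map uc fs \<in> lim_rel m n0 Rp"
  then obtain d where "map uc fs \<in> rel_at m n0 Rp (n0 + d)" unfolding lim_rel_def by blast
  then show "large N (\<lambda>j xs. map (\<lambda>f. f j xs) fs \<in> Rp j (take n0 xs))"
    by (rule large_if_in_rel_at[OF assms(1) le_add1 assms(3)])
next
  assume "large N (\<lambda>j xs. map (\<lambda>f. f j xs) fs \<in> Rp j (take n0 xs))"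
  then have "map uc fs \<in> rel_at m n0 Rp (n0 + (N - n0))" unfolding rel_at_def using assms by auto
  then show "map uc fs \<in> lim_rel m n0 Rp" unfolding lim_rel_def by blast
qed

section \<open>Los's theorem\<close>

text \<open>\<open>represents n vr Vr v V\<close>: the coordinatewise assignments \<open>vr\<close>, \<open>Vr\<close> live at level
  \<open>n\<close>, and their ultraproducts are the assignments \<open>v\<close>, \<open>V\<close> of the limit-Henkin model.\<close>

definition represents :: "nat \<Rightarrow> (nat \<Rightarrow> 'j \<Rightarrow> 'i list \<Rightarrow> 'u) \<Rightarrow> (nat \<times> nat \<Rightarrow> 'j \<Rightarrow> 'i list \<Rightarrow> 'u list set)
    \<Rightarrow> (nat \<Rightarrow> ('j \<Rightarrow> 'i list \<Rightarrow> 'u) set) \<Rightarrow> (nat \<times> nat \<Rightarrow> ('j \<Rightarrow> 'i list \<Rightarrow> 'u) set list set) \<Rightarrow> bool"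
  where
  "represents n vr Vr v V \<longleftrightarrow> (\<forall>x. vf n (vr x) \<and> v x = uc (vr x)) \<and> (\<forall>Xm. ndep n (Vr Xm))
     \<and> (\<forall>X m fs N. 1 \<le> m \<longrightarrow> n \<le> N \<longrightarrow> length fs = m \<longrightarrow> (\<forall>f\<in>set fs. vf N f) \<longrightarrow>
          (map uc fs \<in> V (X, m) \<longleftrightarrow> large N (\<lambda>j xs. map (\<lambda>f. f j xs) fs \<in> Vr (X, m) j xs)))"

abbreviation coord_sat :: "(nat \<Rightarrow> 'j \<Rightarrow> 'i list \<Rightarrow> 'u) \<Rightarrow> (nat \<times> nat \<Rightarrow> 'j \<Rightarrow> 'i list \<Rightarrow> 'u list set)
    \<Rightarrow> ('f, 'r) form \<Rightarrow> 'j \<Rightarrow> 'i list \<Rightarrow> bool" where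
  "coord_sat vr Vr \<phi> j xs \<equiv> hsat (B j) (full_rels (B j)) (\<lambda>y. vr y j xs) (\<lambda>Xm. Vr Xm j xs) \<phi>"

lemma representsI:
  assumes "\<And>x. vf n (vr x)" "\<And>x. v x = uc (vr x)" "\<And>Xm. ndep n (Vr Xm)"
    "\<And>X m fs N. 1 \<le> m \<Longrightarrow> n \<le> N \<Longrightarrow> length fs = m \<Longrightarrow> \<forall>f\<in>set fs. vf N f \<Longrightarrow>
          map uc fs \<in> V (X, m) \<longleftrightarrow> large N (\<lambda>j xs. map (\<lambda>f. f j xs) fs \<in> Vr (X, m) j xs)"
  shows "represents n vr Vr v V"
  unfolding represents_def using assms by blast

lemma represents_vfun: "represents n vr Vr v V \<Longrightarrow> vf n (vr x)"
  unfolding represents_def by blast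

lemma represents_val: "represents n vr Vr v V \<Longrightarrow> v = (\<lambda>x. uc (vr x))"
  unfolding represents_def by blast

lemma represents_ndep: "represents n vr Vr v V \<Longrightarrow> ndep n (Vr Xm)"
  unfolding represents_def by blast

lemma represents_rel:
  "represents n vr Vr v V \<Longrightarrow> 1 \<le> m \<Longrightarrow> n \<le> N \<Longrightarrow> length fs = m \<Longrightarrow> \<forall>f\<in>set fs. vf N f
   \<Longrightarrow> map uc fs \<in> V (X, m) \<longleftrightarrow> large N (\<lambda>j xs. map (\<lambda>f. f j xs) fs \<in> Vr (X, m) j xs)"
  unfolding represents_def by blast

lemma large_coord_sat_level:
  assumes rep: "represents n vr Vr v V" and "n \<le> N"
  shows "large N (coord_sat vr Vr \<phi>) = large n (coord_sat vr Vr \<phi>)"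
proof (rule large_level[OF \<open>n \<le> N\<close>])
  fix j and xs :: "'i list"
  assume "n \<le> length xs"
  then have "(\<lambda>y. vr y j xs) = (\<lambda>y. vr y j (take n xs))" "(\<lambda>Xm. Vr Xm j xs) = (\<lambda>Xm. Vr Xm j (take n xs))"
    using ndep_take vfun_ndep represents_vfun[OF rep] represents_ndep[OF rep] by fastforce+
  then show "coord_sat vr Vr \<phi> j xs = coord_sat vr Vr \<phi> j (take n xs)" by (simp only:)
qed

lemma represents_mono:
  assumes rep: "represents n vr Vr v V" and "n \<le> N"
  shows "represents N vr Vr v V"
  using assms vfun_mono[OF represents_vfun[OF rep]] ndep_mono[OF represents_ndep[OF rep]]
    represents_val[OF rep] represents_rel[OF rep]
  by (intro representsI) auto

lemma represents_upd:
  assumes rep: "represents n vr Vr v V" and "vf n f"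
  shows "represents n (vr(x := f)) Vr (v(x := uc f)) V"
  using assms represents_vfun[OF rep] represents_ndep[OF rep] represents_val[OF rep] represents_rel[OF rep]
  by (intro representsI) auto

lemma represents_upd_rel:
  assumes rep: "represents n vr Vr v V" and "n0 \<le> n"
  shows "represents n vr (Vr((X, m) := (\<lambda>j xs. Rp j (take n0 xs)))) v (V((X, m) := lim_rel m n0 Rp))"
proof (rule representsI)
  have "ndep n (\<lambda>j xs. Rp j (take n0 xs))"
    using \<open>n0 \<le> n\<close> unfolding ndep_def by (simp add: min_absorb1)
  then show "ndep n ((Vr((X, m) := (\<lambda>j xs. Rp j (take n0 xs)))) Xm)" for Xm
    using represents_ndep[OF rep] by simp
next
  fix X' m' fs N
  assume "1 \<le> m'" "n \<le> N" "length fs = m'" "\<forall>f\<in>set fs. vf N f"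
  then show "map uc fs \<in> (V((X, m) := lim_rel m n0 Rp)) (X', m')
     \<longleftrightarrow> large N (\<lambda>j xs. map (\<lambda>f. f j xs) fs \<in> (Vr((X, m) := (\<lambda>j xs. Rp j (take n0 xs)))) (X', m') j xs)"
    using represents_rel[OF rep] map_ucls_in_lim_rel_iff[of n0 N fs m Rp] \<open>n0 \<le> n\<close> by auto
qed (use represents_vfun[OF rep] represents_val[OF rep] in simp_all)

lemma teval_list_limit:
  assumes "\<forall>x. vf n (vr x)" and "\<forall>t\<in>set ts. wf_trm fa t"
  shows "map (teval A\<^sub>\<omega> (\<lambda>x. uc (vr x))) ts = map uc (map (\<lambda>t j xs. teval (B j) (\<lambda>x. vr x j xs) t) ts)"
    and "\<forall>f\<in>set (map (\<lambda>t j xs. teval (B j) (\<lambda>x. vr x j xs) t) ts). vf n f"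
  using assms teval_limit vfun_teval by auto

lemma large_coord_sat_Ex_intro:
  assumes "vf n f" and "large n (coord_sat (vr(x := f)) Vr p)"
  shows "large n (coord_sat vr Vr (Ex x p))"
  using assms(2)
proof (rule large_mono)
  fix j xs assume "j \<in> J" "xs \<in> vlists I n" "coord_sat (vr(x := f)) Vr p j xs"
  moreover have "f j xs \<in> dom (B j)" using assms(1) \<open>j \<in> J\<close> \<open>xs \<in> vlists I n\<close> unfolding vfun_def by blast
  moreover have "(\<lambda>y. (vr(x := f)) y j xs) = (\<lambda>y. vr y j xs)(x := f j xs)" by auto
  ultimately show "coord_sat vr Vr (Ex x p) j xs" by auto
qed

lemma large_coord_sat_Ex_witness:
  assumes "large n (coord_sat vr Vr (Ex x p))"
  obtains f where "vf n f" and "large n (coord_sat (vr(x := f)) Vr p)"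
proof -
  let ?P = "\<lambda>j xs a. hsat (B j) (full_rels (B j)) ((\<lambda>y. vr y j xs)(x := a)) (\<lambda>Xm. Vr Xm j xs) p"
  have "\<forall>j xs. \<exists>a. j \<in> J \<longrightarrow> a \<in> dom (B j) \<and> ((\<exists>b\<in>dom (B j). ?P j xs b) \<longrightarrow> ?P j xs a)"
    using dom_B_not_empty by blast
  then obtain w where w: "\<And>j xs. j \<in> J \<Longrightarrow> w j xs \<in> dom (B j) \<and> ((\<exists>b\<in>dom (B j). ?P j xs b) \<longrightarrow> ?P j xs (w j xs))"
    by metis
  define f where "f j xs = w j (take n xs)" for j xs
  have "vf n f"
    unfolding vfun_def ndep_def f_def using w by (auto simp: min_def length_vlists)
  moreover have "large n (coord_sat (vr(x := f)) Vr p)"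
    using assms
  proof (rule large_mono)
    fix j xs assume "j \<in> J" "xs \<in> vlists I n" "coord_sat vr Vr (Ex x p) j xs"
    moreover have "(\<lambda>y. (vr(x := f)) y j xs) = (\<lambda>y. vr y j xs)(x := w j xs)"
      using \<open>xs \<in> vlists I n\<close> by (auto simp: f_def length_vlists)
    ultimately show "coord_sat (vr(x := f)) Vr p j xs" using w by auto
  qed
  ultimately show ?thesis by (rule that)
qed

lemma large_coord_sat_ExR_intro:
  assumes "rel_family m n0 Rp" and "n0 \<le> n"
    and "large n (coord_sat vr (Vr((X, m) := (\<lambda>j xs. Rp j (take n0 xs)))) p)"
  shows "large n (coord_sat vr Vr (ExR X m p))"
  using assms(3)
proof (rule large_mono)
  let ?Vr = "Vr((X, m) := (\<lambda>j xs. Rp j (take n0 xs)))"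
  fix j xs assume "j \<in> J" "xs \<in> vlists I n" "coord_sat vr ?Vr p j xs"
  moreover have "Rp j (take n0 xs) \<in> full_rels (B j) m"
    using assms(1) \<open>j \<in> J\<close> take_in_vlists[OF \<open>xs \<in> vlists I n\<close> \<open>n0 \<le> n\<close>]
    unfolding rel_family_def full_rels_def by blast
  moreover have "(\<lambda>Xm. ?Vr Xm j xs) = (\<lambda>Xm. Vr Xm j xs)((X, m) := Rp j (take n0 xs))"
    by (rule ext) simp
  ultimately show "coord_sat vr Vr (ExR X m p) j xs" by auto
qed

lemma large_coord_sat_ExR_witness:
  assumes "large n (coord_sat vr Vr (ExR X m p))"
  obtains Rp where "rel_family m n Rp"
    and "large n (coord_sat vr (Vr((X, m) := (\<lambda>j xs. Rp j (take n xs)))) p)"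
proof -
  let ?P = "\<lambda>j xs R. hsat (B j) (full_rels (B j)) (\<lambda>y. vr y j xs) ((\<lambda>Xm. Vr Xm j xs)((X, m) := R)) p"
  have "\<forall>j xs. \<exists>R. R \<in> full_rels (B j) m \<and> ((\<exists>R'\<in>full_rels (B j) m. ?P j xs R') \<longrightarrow> ?P j xs R)"
    by (metis empty_subsetI full_rels_def PowI)
  then obtain Rp where Rp: "\<And>j xs. Rp j xs \<in> full_rels (B j) m
      \<and> ((\<exists>R'\<in>full_rels (B j) m. ?P j xs R') \<longrightarrow> ?P j xs (Rp j xs))"
    by metis
  have "rel_family m n Rp" using Rp unfolding rel_family_def full_rels_def by blast
  moreover have "large n (coord_sat vr (Vr((X, m) := (\<lambda>j xs. Rp j (take n xs)))) p)"
    using assms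
  proof (rule large_mono)
    fix j xs assume "j \<in> J" "xs \<in> vlists I n" "coord_sat vr Vr (ExR X m p) j xs"
    moreover have "(\<lambda>Xm. (Vr((X, m) := (\<lambda>j xs. Rp j (take n xs)))) Xm j xs) = (\<lambda>Xm. Vr Xm j xs)((X, m) := Rp j xs)"
      using length_vlists[OF \<open>xs \<in> vlists I n\<close>] by (intro ext) simp
    ultimately show "coord_sat vr (Vr((X, m) := (\<lambda>j xs. Rp j (take n xs)))) p j xs" using Rp by auto
  qed
  ultimately show ?thesis by (rule that)
qed

lemma los_Ex:
  assumes IH: "\<And>n vr Vr v V. represents n vr Vr v V \<Longrightarrow>
      hsat A\<^sub>\<omega> \<Upsilon> v V p \<longleftrightarrow> large n (coord_sat vr Vr p)"
    and rep: "represents n vr Vr v V"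
  shows "hsat A\<^sub>\<omega> \<Upsilon> v V (Ex x p) \<longleftrightarrow> large n (coord_sat vr Vr (Ex x p))"
proof
  assume "hsat A\<^sub>\<omega> \<Upsilon> v V (Ex x p)"
  then obtain a where "a \<in> dom A\<^sub>\<omega>" and a: "hsat A\<^sub>\<omega> \<Upsilon> (v(x := a)) V p" by auto
  from \<open>a \<in> dom A\<^sub>\<omega>\<close> obtain k f where "vf k f" and "a = uc f" by (rule limit_domE)
  define M where "M = max n k"
  have "n \<le> M" and f: "vf M f" using vfun_mono[OF \<open>vf k f\<close>] unfolding M_def by simp_all
  have "large M (coord_sat (vr(x := f)) Vr p)"
    using IH[OF represents_upd[OF represents_mono[OF rep \<open>n \<le> M\<close>] f]] a \<open>a = uc f\<close> by blast
  with f have "large M (coord_sat vr Vr (Ex x p))" by (rule large_coord_sat_Ex_intro)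
  then show "large n (coord_sat vr Vr (Ex x p))"
    using large_coord_sat_level[OF rep \<open>n \<le> M\<close>, of "Ex x p"] by blast
next
  assume "large n (coord_sat vr Vr (Ex x p))"
  then obtain f where f: "vf n f" and "large n (coord_sat (vr(x := f)) Vr p)"
    by (rule large_coord_sat_Ex_witness)
  then have "hsat A\<^sub>\<omega> \<Upsilon> (v(x := uc f)) V p" using IH[OF represents_upd[OF rep f]] by blast
  then show "hsat A\<^sub>\<omega> \<Upsilon> v V (Ex x p)" using ucls_in_limit_dom[OF f] by auto
qed

lemma los_ExR:
  assumes IH: "\<And>n vr Vr v V. represents n vr Vr v V \<Longrightarrow>
      hsat A\<^sub>\<omega> \<Upsilon> v V p \<longleftrightarrow> large n (coord_sat vr Vr p)"
    and rep: "represents n vr Vr v V"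
  shows "hsat A\<^sub>\<omega> \<Upsilon> v V (ExR X m p) \<longleftrightarrow> large n (coord_sat vr Vr (ExR X m p))"
proof
  assume "hsat A\<^sub>\<omega> \<Upsilon> v V (ExR X m p)"
  then obtain R where "R \<in> \<Upsilon> m" and R: "hsat A\<^sub>\<omega> \<Upsilon> v (V((X, m) := R)) p" by auto
  then obtain n0 Rp where Rp: "rel_family m n0 Rp" and "R = lim_rel m n0 Rp" using ups_lim_iff by blast
  define M where "M = max n n0"
  have "n \<le> M" "n0 \<le> M" unfolding M_def by simp_all
  have "large M (coord_sat vr (Vr((X, m) := (\<lambda>j xs. Rp j (take n0 xs)))) p)"
    using IH[OF represents_upd_rel[OF represents_mono[OF rep \<open>n \<le> M\<close>] \<open>n0 \<le> M\<close>]] R \<open>R = _\<close>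
    by blast
  with Rp \<open>n0 \<le> M\<close> have "large M (coord_sat vr Vr (ExR X m p))" by (rule large_coord_sat_ExR_intro)
  then show "large n (coord_sat vr Vr (ExR X m p))"
    using large_coord_sat_level[OF rep \<open>n \<le> M\<close>, of "ExR X m p"] by blast
next
  assume "large n (coord_sat vr Vr (ExR X m p))"
  then obtain Rp where "rel_family m n Rp"
    and "large n (coord_sat vr (Vr((X, m) := (\<lambda>j xs. Rp j (take n xs)))) p)"
    by (rule large_coord_sat_ExR_witness)
  then have "lim_rel m n Rp \<in> \<Upsilon> m" and "hsat A\<^sub>\<omega> \<Upsilon> v (V((X, m) := lim_rel m n Rp)) p"
    using ups_lim_iff IH[OF represents_upd_rel[OF rep le_refl]] by blast+
  then show "hsat A\<^sub>\<omega> \<Upsilon> v V (ExR X m p)" by auto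
qed

lemma los_Eq:
  assumes rep: "represents n vr Vr v V" and "wf_trm fa s" "wf_trm fa t"
  shows "hsat A\<^sub>\<omega> \<Upsilon> v V (Eq s t) \<longleftrightarrow> large n (coord_sat vr Vr (Eq s t))"
proof -
  have vr: "\<forall>x. vf n (vr x)" using represents_vfun[OF rep] by blast
  have "hsat A\<^sub>\<omega> \<Upsilon> v V (Eq s t) \<longleftrightarrow>
      uc (\<lambda>j xs. teval (B j) (\<lambda>x. vr x j xs) s) = uc (\<lambda>j xs. teval (B j) (\<lambda>x. vr x j xs) t)"
    using teval_limit[OF vr] assms(2,3) represents_val[OF rep] by simp
  also have "\<dots> \<longleftrightarrow> large n (\<lambda>j xs. teval (B j) (\<lambda>x. vr x j xs) s = teval (B j) (\<lambda>x. vr x j xs) t)"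
    using ucls_eq_iff vfun_ndep vfun_teval[OF vr] assms(2,3) by blast
  finally show ?thesis by simp
qed

lemma los_Rel:
  assumes rep: "represents n vr Vr v V" and wf: "\<forall>t\<in>set ts. wf_trm fa t"
  shows "hsat A\<^sub>\<omega> \<Upsilon> v V (Rel r ts) \<longleftrightarrow> large n (coord_sat vr Vr (Rel r ts))"
proof -
  have vr: "\<forall>x. vf n (vr x)" using represents_vfun[OF rep] by blast
  have "hsat A\<^sub>\<omega> \<Upsilon> v V (Rel r ts) \<longleftrightarrow>
      map uc (map (\<lambda>t j xs. teval (B j) (\<lambda>x. vr x j xs) t) ts) \<in> rel_int A\<^sub>\<omega> r"
    by (simp only: hsat.simps represents_val[OF rep] teval_list_limit(1)[OF vr wf])
  also have "\<dots> \<longleftrightarrow> large n (coord_sat vr Vr (Rel r ts))"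
    using rel_int_limit_iff[OF teval_list_limit(2)[OF vr wf]] by (simp add: comp_def)
  finally show ?thesis .
qed

lemma los_RVar:
  assumes rep: "represents n vr Vr v V" and wf: "\<forall>t\<in>set ts. wf_trm fa t" and "ts \<noteq> []"
  shows "hsat A\<^sub>\<omega> \<Upsilon> v V (RVar X ts) \<longleftrightarrow> large n (coord_sat vr Vr (RVar X ts))"
proof -
  have vr: "\<forall>x. vf n (vr x)" using represents_vfun[OF rep] by blast
  have "1 \<le> length ts" using \<open>ts \<noteq> []\<close> by (simp add: Suc_le_eq)
  have "hsat A\<^sub>\<omega> \<Upsilon> v V (RVar X ts) \<longleftrightarrow>
      map uc (map (\<lambda>t j xs. teval (B j) (\<lambda>x. vr x j xs) t) ts) \<in> V (X, length ts)"
    by (simp only: hsat.simps represents_val[OF rep] teval_list_limit(1)[OF vr wf])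
  also have "\<dots> \<longleftrightarrow> large n (coord_sat vr Vr (RVar X ts))"
    using represents_rel[OF rep \<open>1 \<le> length ts\<close> le_refl _ teval_list_limit(2)[OF vr wf]]
    by (simp add: comp_def)
  finally show ?thesis .
qed

theorem los:
  "represents n vr Vr v V \<Longrightarrow> wf_form fa ra \<phi> \<Longrightarrow>
   hsat A\<^sub>\<omega> \<Upsilon> v V \<phi> \<longleftrightarrow> large n (coord_sat vr Vr \<phi>)"
proof (induction \<phi> arbitrary: n vr Vr v V)
  case (Eq s t)
  then show ?case by (intro los_Eq) simp_all
next
  case (Rel r ts)
  then show ?case by (intro los_Rel) simp_all
next
  case (RVar X ts)
  then show ?case by (intro los_RVar) simp_all
next
  case (Neg p)
  then show ?case using large_not_iff by simp
next
  case (Conj p q)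
  then show ?case using large_conj_iff by simp
next
  case (Ex x p)
  then show ?case by (intro los_Ex) simp_all
next
  case (ExR X m p)
  then show ?case by (intro los_ExR) simp_all
qed

definition some_elem :: "'j \<Rightarrow> 'i list \<Rightarrow> 'u" where
  "some_elem j xs = (SOME a. a \<in> dom (B j))"

lemma vfun_some_elem: "vf n some_elem"
  unfolding vfun_def ndep_def some_elem_def using dom_B_not_empty by (simp add: some_in_eq)

lemma represents_lim_rels:
  assumes "\<forall>x. vf N (vr x)" and "\<forall>Xm. n0 Xm \<le> N"
  shows "represents N vr (\<lambda>Xm j xs. R Xm j (take (n0 Xm) xs)) (\<lambda>x. uc (vr x))
    (\<lambda>Xm. if 1 \<le> snd Xm then lim_rel (snd Xm) (n0 Xm) (R Xm) else V0 Xm)"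
proof (rule representsI)
  show "ndep N (\<lambda>j xs. R Xm j (take (n0 Xm) xs))" for Xm
    using assms(2)[rule_format, of Xm] unfolding ndep_def by (simp add: min_absorb1)
next
  fix X m fs N'
  assume "1 \<le> m" "N \<le> N'" "length fs = m" "\<forall>f\<in>set fs. vf N' f"
  with assms(2) show "map uc fs \<in> (if 1 \<le> snd (X, m) then lim_rel (snd (X, m)) (n0 (X, m)) (R (X, m)) else V0 (X, m))
      \<longleftrightarrow> large N' (\<lambda>j xs. map (\<lambda>f. f j xs) fs \<in> R (X, m) j (take (n0 (X, m)) xs))"
    using map_ucls_in_lim_rel_iff[of "n0 (X, m)" N' fs m "R (X, m)"] by (auto intro: order_trans)
qed (use assms(1) in simp_all)

lemma limit_assignment_levels:
  fixes v :: "nat \<Rightarrow> ('j \<Rightarrow> 'i list \<Rightarrow> 'u) set"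
  assumes "\<forall>x. v x \<in> dom A\<^sub>\<omega>" and "\<forall>X m. 1 \<le> m \<longrightarrow> V (X, m) \<in> \<Upsilon> m"
  obtains lv lev Rp where "\<And>x. vf (lv x) (ur (v x))"
    and "\<And>Xm. 1 \<le> snd Xm \<Longrightarrow> rel_family (snd Xm) (lev Xm) (Rp Xm) \<and> V Xm = lim_rel (snd Xm) (lev Xm) (Rp Xm)"
proof -
  have "\<forall>x. \<exists>k. vf k (ur (v x))" using assms(1) urep_spec(1) by blast
  moreover have "\<forall>Xm. \<exists>n0 R. 1 \<le> snd Xm \<longrightarrow> rel_family (snd Xm) n0 R \<and> V Xm = lim_rel (snd Xm) n0 R"
    using assms(2) ups_lim_iff by (metis prod.collapse)
  ultimately show ?thesis using that by metis
qed

lemma exists_representation: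
  fixes v :: "nat \<Rightarrow> ('j \<Rightarrow> 'i list \<Rightarrow> 'u) set"
  assumes v: "\<forall>x. v x \<in> dom A\<^sub>\<omega>" and V: "\<forall>X m. 1 \<le> m \<longrightarrow> V (X, m) \<in> \<Upsilon> m"
    and "finite Xs" "finite Rs"
  obtains N vr Vr v' V' where "represents N vr Vr v' V'"
    and "\<forall>x\<in>Xs. v' x = v x" and "\<forall>Xm\<in>Rs. V' Xm = V Xm"
    and "\<And>j xs X m. j \<in> J \<Longrightarrow> xs \<in> vlists I N \<Longrightarrow> 1 \<le> m \<Longrightarrow> Vr (X, m) j xs \<in> full_rels (B j) m"
proof -
  obtain lv lev Rp where lv: "\<And>x. vf (lv x) (ur (v x))" and lev: "\<And>Xm. 1 \<le> snd Xm \<Longrightarrow>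
      rel_family (snd Xm) (lev Xm) (Rp Xm) \<and> V Xm = lim_rel (snd Xm) (lev Xm) (Rp Xm)"
    using limit_assignment_levels[OF v V] by blast
  define N where "N = Max (lv ` Xs \<union> lev ` Rs)"
  define vr where "vr x = (if x \<in> Xs then ur (v x) else some_elem)" for x
  define n0 where "n0 Xm = (if Xm \<in> Rs then lev Xm else 0)" for Xm
  define R where "R Xm = (if Xm \<in> Rs then Rp Xm else (\<lambda>_ _. {}))" for Xm
  have "lv x \<le> N" if "x \<in> Xs" for x
    unfolding N_def using assms(3,4) that by (intro Max_ge) auto
  then have "\<forall>x. vf N (vr x)" unfolding vr_def using vfun_mono[OF lv] vfun_some_elem by simp
  moreover have levN: "lev Xm \<le> N" if "Xm \<in> Rs" for Xm
    unfolding N_def using assms(3,4) that by (intro Max_ge) auto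
  then have "\<forall>Xm. n0 Xm \<le> N" unfolding n0_def by simp
  ultimately have rep: "represents N vr (\<lambda>Xm j xs. R Xm j (take (n0 Xm) xs)) (\<lambda>x. uc (vr x))
      (\<lambda>Xm. if 1 \<le> snd Xm then lim_rel (snd Xm) (n0 Xm) (R Xm) else V Xm)"
    by (rule represents_lim_rels)
  have rels: "R (X, m) j (take (n0 (X, m)) xs) \<in> full_rels (B j) m"
    if "j \<in> J" "xs \<in> vlists I N" "1 \<le> m" for j xs X m
  proof (cases "(X, m) \<in> Rs")
    case True
    then have "take (lev (X, m)) xs \<in> vlists I (lev (X, m))" using take_in_vlists that(2) levN by blast
    with True lev[of "(X, m)"] that show ?thesis
      unfolding n0_def R_def rel_family_def full_rels_def by auto
  qed (simp add: R_def full_rels_def)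
  have "\<forall>x\<in>Xs. uc (vr x) = v x" unfolding vr_def using urep_spec(2) v by simp
  moreover have "\<forall>Xm\<in>Rs. (if 1 \<le> snd Xm then lim_rel (snd Xm) (n0 Xm) (R Xm) else V Xm) = V Xm"
    unfolding n0_def R_def using lev by auto
  ultimately show ?thesis using rels by (intro that[OF rep]) simp_all
qed

lemma henkin_models_if_large:
  assumes wf: "wf_form fa ra \<phi>" and large_models: "{j \<in> J. full_models (B j) \<phi>} \<in> G"
  shows "henkin_models A\<^sub>\<omega> \<Upsilon> \<phi>"
  unfolding henkin_models_def
proof (intro allI impI)
  fix v :: "nat \<Rightarrow> ('j \<Rightarrow> 'i list \<Rightarrow> 'u) set" and V :: "nat \<times> nat \<Rightarrow> ('j \<Rightarrow> 'i list \<Rightarrow> 'u) set list set"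
  assume "\<forall>x. v x \<in> dom A\<^sub>\<omega>" and "\<forall>X m. 1 \<le> m \<longrightarrow> V (X, m) \<in> \<Upsilon> m"
  then obtain N vr Vr v' V' where rep: "represents N vr Vr v' V'"
    and "\<forall>x\<in>fvs \<phi>. v' x = v x" and "\<forall>Xm\<in>frvs \<phi>. V' Xm = V Xm"
    and Vr: "\<And>j xs X m. j \<in> J \<Longrightarrow> xs \<in> vlists I N \<Longrightarrow> 1 \<le> m \<Longrightarrow> Vr (X, m) j xs \<in> full_rels (B j) m"
    by (rule exists_representation[OF _ _ finite_fvs[of \<phi>] finite_frvs[of \<phi>]]) blast
  have "large N (\<lambda>j xs. full_models (B j) \<phi>)" using large_models large_const by simp
  then have "large N (coord_sat vr Vr \<phi>)"
  proof (rule large_mono)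
    fix j xs assume j: "j \<in> J" and xs: "xs \<in> vlists I N" and "full_models (B j) \<phi>"
    have "\<forall>x. vr x j xs \<in> dom (B j)"
      using represents_vfun[OF rep] j xs unfolding vfun_def by blast
    moreover have "\<forall>X m. 1 \<le> m \<longrightarrow> Vr (X, m) j xs \<in> full_rels (B j) m" using Vr j xs by blast
    ultimately show "coord_sat vr Vr \<phi> j xs"
      using \<open>full_models (B j) \<phi>\<close> unfolding full_models_def henkin_models_def
      by (elim allE[of _ "\<lambda>y. vr y j xs"] allE[of _ "\<lambda>Xm. Vr Xm j xs"]) blast
  qed
  then have "hsat A\<^sub>\<omega> \<Upsilon> v' V' \<phi>" by (simp only: los[OF rep wf])
  with \<open>\<forall>x\<in>fvs \<phi>. v' x = v x\<close> \<open>\<forall>Xm\<in>frvs \<phi>. V' Xm = V Xm\<close>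
  show "hsat A\<^sub>\<omega> \<Upsilon> v V \<phi>" by (simp only: hsat_agree)
qed

lemma large_if_henkin_models:
  assumes wf: "wf_form fa ra \<phi>" and models: "henkin_models A\<^sub>\<omega> \<Upsilon> \<phi>"
  shows "{j \<in> J. full_models (B j) \<phi>} \<in> G"
proof -
  have "\<forall>j\<in>J. \<exists>v V. (\<forall>x. v x \<in> dom (B j)) \<and> (\<forall>X m. 1 \<le> m \<longrightarrow> V (X, m) \<in> full_rels (B j) m)
      \<and> (hsat (B j) (full_rels (B j)) v V \<phi> \<longrightarrow> full_models (B j) \<phi>)"
    using exists_refuting_assignment[OF dom_B_not_empty] by blast
  then obtain w W where w: "\<And>j. j \<in> J \<Longrightarrow> (\<forall>x. w j x \<in> dom (B j))
      \<and> (\<forall>X m. 1 \<le> m \<longrightarrow> W j (X, m) \<in> full_rels (B j) m)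
      \<and> (hsat (B j) (full_rels (B j)) (w j) (W j) \<phi> \<longrightarrow> full_models (B j) \<phi>)"
    by metis
  define vr where "vr x j xs = w j x" for x j and xs :: "'i list"
  define R where "R Xm j xs = W j Xm" for Xm j and xs :: "'i list"
  have vr: "\<forall>x. vf 0 (vr x)" using w unfolding vr_def vfun_def ndep_def by simp
  then have rep: "represents 0 vr (\<lambda>Xm j xs. R Xm j []) (\<lambda>x. uc (vr x)) (\<lambda>Xm. lim_rel (snd Xm) 0 (R Xm))"
    using represents_lim_rels[OF vr, of "\<lambda>_. 0" R "\<lambda>Xm. lim_rel (snd Xm) 0 (R Xm)"] by simp
  have "\<forall>x. uc (vr x) \<in> dom A\<^sub>\<omega>" using ucls_in_limit_dom vr by blast
  moreover have "lim_rel m 0 (R (X, m)) \<in> \<Upsilon> m" if "1 \<le> m" for X m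
  proof -
    have "rel_family m 0 (R (X, m))"
      using w that unfolding rel_family_def R_def full_rels_def by blast
    then show ?thesis using ups_lim_iff by blast
  qed
  ultimately have "hsat A\<^sub>\<omega> \<Upsilon> (\<lambda>x. uc (vr x)) (\<lambda>Xm. lim_rel (snd Xm) 0 (R Xm)) \<phi>"
    using models unfolding henkin_models_def
    by (elim allE[of _ "\<lambda>x. uc (vr x)"] allE[of _ "\<lambda>Xm. lim_rel (snd Xm) 0 (R Xm)"]) simp
  then have "large 0 (coord_sat vr (\<lambda>Xm j xs. R Xm j []) \<phi>)"
    by (simp only: los[OF rep wf])
  then have "{j \<in> J. hsat (B j) (full_rels (B j)) (w j) (W j) \<phi>} \<in> G"
    by (simp add: vr_def R_def)
  moreover have "{j \<in> J. hsat (B j) (full_rels (B j)) (w j) (W j) \<phi>} \<subseteq> {j \<in> J. full_models (B j) \<phi>}"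
    using w by blast
  ultimately show ?thesis using ultrafilter_on_superset[OF ultrafilter_G] by blast
qed

end

theorem lemma2p17:
  fixes fa :: "'f \<Rightarrow> nat" and ra :: "'r \<Rightarrow> nat"
    and \<phi> :: "('f, 'r) form"
    and J :: "'j set" and B :: "'j \<Rightarrow> ('f, 'r, 'u) struct" and G :: "'j set set"
    and I :: "nat \<Rightarrow> 'i set" and F :: "nat \<Rightarrow> 'i set set"
  assumes "wf_form fa ra \<phi>"
    and "\<forall>j\<in>J. is_struct fa ra (B j)"
    and "ultrafilter_on J G"
    and "\<forall>n. ultrafilter_on (I n) (F n)"
  shows "{j \<in> J. full_models (B j) \<phi>} \<in> G
     \<longleftrightarrow> henkin_models (limit_struct J B G I F) (ups_lim J B G I F) \<phi>"
proof -
  interpret limit_chain J G I F B fa ra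
    using assms(2-4) by unfold_locales auto
  show ?thesis
    using henkin_models_if_large[OF assms(1)] large_if_henkin_models[OF assms(1)] by blast
qed

end
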